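(* Let $X$ be a finite semi-permutation all of whose points have $x$-coordinates in $\{0,1,\dots,N-1\}$, let $0\le s<N$ be an integer, and let $X^s=\{((p.x+s)\bmod N,\;p.y): p\in X\}$ be the cyclic shift of $X$ by $s$ units to the right. Then $\mathrm{opt}(X^s)\ge \mathrm{opt}(X)-|X|$.
   Context: Points have integer coordinates. Two points $p,q$ are collinear if $p.x=q.x$ or $p.y=q.y$; otherwise $\square_{p,q}$ is the smallest closed axis-parallel rectangle containing both. A non-collinear pair $(p,q)$ is satisfied in $S$ if some $r\in S\setminus\{p,q\}$ lies in $\square_{p,q}$; $S$ is satisfied if all its non-collinear pairs are satisfied. $X$ is a semi-permutation if every horizontal line containing a point of $X$ contains exactly one. $\mathrm{opt}(X)$ is the minimum $|Y|$ over point sets $Y$ such that $X\cup Y$ is satisfied. *)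

theory Defs
  imports Main
begin

type_synonym point = "int \<times> int"

definition collinear :: "point \<Rightarrow> point \<Rightarrow> bool" where
  "collinear p q \<longleftrightarrow> fst p = fst q \<or> snd p = snd q"

definition rect :: "point \<Rightarrow> point \<Rightarrow> point set" where
  "rect p q = {r. min (fst p) (fst q) \<le> fst r \<and> fst r \<le> max (fst p) (fst q)
                \<and> min (snd p) (snd q) \<le> snd r \<and> snd r \<le> max (snd p) (snd q)}"

definition pair_satisfied :: "point set \<Rightarrow> point \<Rightarrow> point \<Rightarrow> bool" where
  "pair_satisfied S p q \<longleftrightarrow> (\<exists>r \<in> S - {p, q}. r \<in> rect p q)"

definition satisfied :: "point set \<Rightarrow> bool" where
  "satisfied S \<longleftrightarrow> (\<forall>p\<in>S. \<forall>q\<in>S. \<not> collinear p q \<longrightarrow> pair_satisfied S p q)"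

definition semi_permutation :: "point set \<Rightarrow> bool" where
  "semi_permutation X \<longleftrightarrow> (\<forall>p\<in>X. \<forall>q\<in>X. snd p = snd q \<longrightarrow> p = q)"

definition opt :: "point set \<Rightarrow> nat" where
  "opt X = (LEAST n. \<exists>Y. finite Y \<and> card Y = n \<and> satisfied (X \<union> Y))"

definition cyc_shift :: "int \<Rightarrow> int \<Rightarrow> point set \<Rightarrow> point set" where
  "cyc_shift N s X = (\<lambda>p. ((fst p + s) mod N, snd p)) ` X"

end

theory Submission
  imports Defs
begin

text \<open>
  Take an optimal satisfied superset \<open>Z\<close> of the shifted set.  Cutting \<open>Z\<close> along the
  vertical line \<open>x = s\<close> and swapping the two halves undoes the shift on the points of \<open>X\<close>.
  Each half stays satisfied after clamping its \<open>x\<close>-coordinates into the target strip and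
  rounding all \<open>y\<close>-coordinates down to rows of \<open>X\<close>, since monotone coordinate maps preserve
  satisfaction.  Pairs split by the seam are then satisfied by adding one column on the seam
  containing every row of \<open>X\<close>, at a cost of at most \<open>|X|\<close> extra points.
\<close>

lemma rect_commute: "rect p q = rect q p"
  by (auto simp: rect_def)

lemma collinear_commute: "collinear p q = collinear q p"
  by (auto simp: collinear_def)

lemma pair_satisfied_commute: "pair_satisfied S p q = pair_satisfied S q p"
  by (auto simp: pair_satisfied_def rect_commute)

lemma pair_satisfied_mono: "pair_satisfied S p q \<Longrightarrow> S \<subseteq> T \<Longrightarrow> pair_satisfied T p q"
  unfolding pair_satisfied_def by blast

lemma satisfiedI_left_right:
  assumes "\<And>p q. p \<in> S \<Longrightarrow> q \<in> S \<Longrightarrow> fst p < fst q \<Longrightarrow> snd p \<noteq> snd q \<Longrightarrow>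
      pair_satisfied S p q"
  shows "satisfied S"
  unfolding satisfied_def
proof (intro ballI impI)
  fix p q assume "p \<in> S" "q \<in> S" "\<not> collinear p q"
  then have "fst p \<noteq> fst q" "snd p \<noteq> snd q"
    by (auto simp: collinear_def)
  then show "pair_satisfied S p q"
    using assms \<open>p \<in> S\<close> \<open>q \<in> S\<close> pair_satisfied_commute
    by (metis linorder_neqE)
qed

lemma satisfied_Times: "satisfied (A \<times> B)"
proof (rule satisfiedI_left_right)
  fix p q assume "p \<in> A \<times> B" "q \<in> A \<times> B" "fst p < fst q" "snd p \<noteq> snd q"
  then have "(fst p, snd q) \<in> A \<times> B - {p, q}" "(fst p, snd q) \<in> rect p q"
    by (auto simp: rect_def prod_eq_iff)
  then show "pair_satisfied (A \<times> B) p q"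
    unfolding pair_satisfied_def by blast
qed

lemma opt_witness:
  assumes "finite S"
  shows "\<exists>Y. finite Y \<and> card Y = opt S \<and> satisfied (S \<union> Y)"
proof -
  let ?G = "fst ` S \<times> snd ` S"
  have "S \<union> ?G = ?G"
    by force
  then have "\<exists>n Y. finite Y \<and> card Y = n \<and> satisfied (S \<union> Y)"
    using assms satisfied_Times by (metis finite_SigmaI finite_imageI)
  then show ?thesis
    unfolding opt_def by (rule LeastI_ex)
qed

lemma opt_le: "finite Y \<Longrightarrow> satisfied (S \<union> Y) \<Longrightarrow> opt S \<le> card Y"
  unfolding opt_def by (rule Least_le) blast

lemma opt_le_superset:
  assumes "finite W" "satisfied W" "X \<subseteq> W"
  shows "opt X \<le> card W - card X"
proof -
  have "X \<union> (W - X) = W"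
    using assms(3) by blast
  then have "opt X \<le> card (W - X)"
    using assms(1,2) by (intro opt_le) auto
  then show ?thesis
    using assms by (simp add: card_Diff_subset finite_subset)
qed

lemma satisfied_Int:
  assumes "satisfied S" "\<And>p q. p \<in> H \<Longrightarrow> q \<in> H \<Longrightarrow> rect p q \<subseteq> H"
  shows "satisfied (S \<inter> H)"
  using assms unfolding satisfied_def pair_satisfied_def by fastforce

lemma rect_mono_image:
  fixes f g :: "int \<Rightarrow> int"
  assumes "mono f" "mono g" "r \<in> rect a b"
  shows "(f (fst r), g (snd r)) \<in> rect (f (fst a), g (snd a)) (f (fst b), g (snd b))"
  using assms monoD[OF assms(1)] monoD[OF assms(2)]
  by (auto simp: rect_def min_of_mono max_of_mono)

lemma card_rect_shrink:
  assumes "finite S" "a \<in> S" "r \<in> rect a b" "r \<noteq> a"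
  shows "card (S \<inter> rect r b) < card (S \<inter> rect a b)"
proof (rule psubset_card_mono)
  have "rect r b \<subseteq> rect a b" "a \<in> rect a b" "a \<notin> rect r b"
    using assms(3,4) by (auto simp: rect_def prod_eq_iff)
  then show "S \<inter> rect r b \<subset> S \<inter> rect a b"
    using assms(2) by blast
qed (use assms(1) in simp)

text \<open>
  Among the preimages of a pair, induct on the number of points of \<open>S\<close> in their rectangle:
  a witness that collapses onto an endpoint yields a preimage pair with a smaller rectangle.
\<close>

lemma satisfied_image_mono:
  fixes f g :: "int \<Rightarrow> int"
  assumes "finite S" "satisfied S" "mono f" "mono g"
  shows "satisfied ((\<lambda>p. (f (fst p), g (snd p))) ` S)"
proof -
  define \<phi> where "\<phi> = (\<lambda>p::point. (f (fst p), g (snd p)))"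
  have "pair_satisfied (\<phi> ` S) (\<phi> a) (\<phi> b)"
    if "a \<in> S" "b \<in> S" "\<not> collinear (\<phi> a) (\<phi> b)" for a b
    using that
  proof (induction "card (S \<inter> rect a b)" arbitrary: a b rule: less_induct)
    case less
    then have "\<not> collinear a b"
      by (auto simp: collinear_def \<phi>_def)
    then obtain r where r: "r \<in> S" "r \<noteq> a" "r \<noteq> b" "r \<in> rect a b"
      using assms(2) less.prems(1,2) unfolding satisfied_def pair_satisfied_def by blast
    consider "\<phi> r = \<phi> a" | "\<phi> r = \<phi> b" | "\<phi> r \<noteq> \<phi> a" "\<phi> r \<noteq> \<phi> b"
      by blast
    then show ?case
    proof cases
      case 1
      have "card (S \<inter> rect r b) < card (S \<inter> rect a b)"
        using assms(1) less.prems(1) r(4,2) by (rule card_rect_shrink)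
      then show ?thesis
        using less r(1) 1 by metis
    next
      case 2
      have "r \<in> rect b a"
        using r(4) rect_commute by blast
      then have "card (S \<inter> rect r a) < card (S \<inter> rect a b)"
        using card_rect_shrink[OF assms(1) less.prems(2) _ r(3)] rect_commute by metis
      then show ?thesis
        using less r(1) 2 rect_commute collinear_commute pair_satisfied_commute by metis
    next
      case 3
      have "\<phi> r \<in> rect (\<phi> a) (\<phi> b)"
        unfolding \<phi>_def using assms(3,4) r(4) by (rule rect_mono_image)
      then show ?thesis
        unfolding pair_satisfied_def using 3 r(1) by blast
    qed
  qed
  then show ?thesis
    unfolding satisfied_def \<phi>_def[symmetric] by blast
qed

lemma ex_mono_retraction:
  fixes R :: "'a::linorder set"
  assumes "finite R" "R \<noteq> {}"
  obtains g where "mono g" "\<And>y. g y \<in> R" "\<And>y. y \<in> R \<Longrightarrow> g y = y"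
proof
  define g where "g y = (if \<exists>r\<in>R. r \<le> y then Max {r\<in>R. r \<le> y} else Min R)" for y
  show "g y \<in> R" for y
  proof (cases "\<exists>r\<in>R. r \<le> y")
    case True
    then have "Max {r\<in>R. r \<le> y} \<in> {r\<in>R. r \<le> y}"
      using assms(1) by (intro Max_in) auto
    then show ?thesis
      using True by (simp add: g_def)
  qed (use assms in \<open>simp add: g_def\<close>)
  show "g y = y" if "y \<in> R" for y
    using that assms(1) by (auto simp: g_def intro!: Max_eqI)
  show "mono g"
  proof
    fix y z :: 'a assume "y \<le> z"
    show "g y \<le> g z"
    proof (cases "\<exists>r\<in>R. r \<le> y")
      case True
      then have "\<exists>r\<in>R. r \<le> z"
        using \<open>y \<le> z\<close> order_trans by blast
      moreover have "Max {r\<in>R. r \<le> y} \<le> Max {r\<in>R. r \<le> z}"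
        using True \<open>y \<le> z\<close> assms(1) by (intro Max_mono) auto
      ultimately show ?thesis
        using True by (simp add: g_def)
    next
      case False
      then show ?thesis
        using \<open>g z \<in> R\<close> assms(1) by (simp add: g_def)
    qed
  qed
qed

lemma satisfied_glue_column:
  assumes "satisfied L" "satisfied U" "\<forall>p\<in>L. fst p < c" "\<forall>p\<in>U. c \<le> fst p"
    and "snd ` (L \<union> U) \<subseteq> R"
  shows "satisfied (L \<union> U \<union> {c} \<times> R)"
    (is "satisfied ?W")
proof (rule satisfiedI_left_right)
  fix p q assume p: "p \<in> ?W" and q: "q \<in> ?W" and "fst p < fst q" "snd p \<noteq> snd q"
  consider "p \<in> L" "q \<in> L" | "p \<in> L" "q \<notin> L" | "p \<in> U" "q \<in> U" | "fst p = c" "q \<in> U"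
    using p q \<open>fst p < fst q\<close> assms(3,4) by fastforce
  then show "pair_satisfied ?W p q"
  proof cases
    case 1
    then have "pair_satisfied L p q"
      using assms(1) \<open>fst p < fst q\<close> \<open>snd p \<noteq> snd q\<close>
      by (auto simp: satisfied_def collinear_def)
    then show ?thesis
      by (rule pair_satisfied_mono) blast
  next
    case 2
    then have "fst p < c" "c \<le> fst q"
      using q assms(3,4) by auto
    then have "(c, snd p) \<in> ?W - {p, q}" "(c, snd p) \<in> rect p q"
      using 2 assms(5) \<open>snd p \<noteq> snd q\<close> by (auto simp: rect_def prod_eq_iff)
    then show ?thesis
      unfolding pair_satisfied_def by blast
  next
    case 3
    then have "pair_satisfied U p q"
      using assms(2) \<open>fst p < fst q\<close> \<open>snd p \<noteq> snd q\<close>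
      by (auto simp: satisfied_def collinear_def)
    then show ?thesis
      by (rule pair_satisfied_mono) blast
  next
    case 4
    then have "(c, snd q) \<in> ?W - {p, q}" "(c, snd q) \<in> rect p q"
      using assms(5) \<open>fst p < fst q\<close> \<open>snd p \<noteq> snd q\<close> by (auto simp: rect_def prod_eq_iff)
    then show ?thesis
      unfolding pair_satisfied_def by blast
  qed
qed

definition swap_halves ::
    "int \<Rightarrow> (int \<Rightarrow> int) \<Rightarrow> (int \<Rightarrow> int) \<Rightarrow> (int \<Rightarrow> int) \<Rightarrow> int \<Rightarrow> int set \<Rightarrow>
      point set \<Rightarrow> point set"
  where "swap_halves s fL fR g c R Z =
    (\<lambda>p. (fL (fst p), g (snd p))) ` (Z \<inter> {p. s \<le> fst p})
      \<union> (\<lambda>p. (fR (fst p), g (snd p))) ` (Z \<inter> {p. fst p < s}) \<union> {c} \<times> R"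

lemma satisfied_swap_halves:
  fixes fL fR g :: "int \<Rightarrow> int"
  assumes "finite Z" "satisfied Z" "mono fL" "mono fR" "mono g"
    and "\<And>x. fL x < c" "\<And>x. c \<le> fR x" "\<And>y. g y \<in> R"
  shows "satisfied (swap_halves s fL fR g c R Z)"
  unfolding swap_halves_def
proof (rule satisfied_glue_column)
  have "satisfied (Z \<inter> {p. s \<le> fst p})" "satisfied (Z \<inter> {p. fst p < s})"
    using assms(2) by (auto intro!: satisfied_Int simp: rect_def)
  then show "satisfied ((\<lambda>p. (fL (fst p), g (snd p))) ` (Z \<inter> {p. s \<le> fst p}))"
    "satisfied ((\<lambda>p. (fR (fst p), g (snd p))) ` (Z \<inter> {p. fst p < s}))"
    using assms(1,3,4,5) by (auto intro!: satisfied_image_mono)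
qed (use assms(6,7,8) in auto)

lemma finite_swap_halves: "finite Z \<Longrightarrow> finite R \<Longrightarrow> finite (swap_halves s fL fR g c R Z)"
  by (simp add: swap_halves_def)

lemma card_swap_halves_le:
  assumes "finite Z"
  shows "card (swap_halves s fL fR g c R Z) \<le> card Z + card R"
proof -
  have "card (swap_halves s fL fR g c R Z)
      \<le> card (Z \<inter> {p. s \<le> fst p}) + card (Z \<inter> {p. fst p < s}) + card ({c} \<times> R)"
    unfolding swap_halves_def using assms
    by (intro card_Un_le[THEN order_trans] add_mono card_image_le order_refl) auto
  also have "card (Z \<inter> {p. s \<le> fst p}) + card (Z \<inter> {p. fst p < s}) = card Z"
    using card_Int_Diff[OF assms, of "{p. s \<le> fst p}"] by (simp add: Diff_eq Compl_eq not_le)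
  finally show ?thesis
    by (simp add: card_cartesian_product_singleton)
qed

lemma mod_add_less_cases:
  fixes x s N :: int
  assumes "0 \<le> x" "x < N" "0 \<le> s" "s < N"
  shows "(x + s) mod N = (if x + s < N then x + s else x + s - N)"
proof (cases "x + s < N")
  case False
  have "(x + s) mod N = (x + s - N) mod N"
    by (metis diff_add_cancel mod_add_self2)
  also have "\<dots> = x + s - N"
    using assms False by (intro mod_pos_pos_trivial) auto
  finally show ?thesis
    using False by simp
qed (use assms in simp)

lemma satisfied_superset_unshift:
  fixes X Z :: "point set" and N s :: int
  assumes "finite Z" "satisfied Z" "cyc_shift N s X \<subseteq> Z"
    and "finite X" "X \<noteq> {}" "\<forall>p\<in>X. 0 \<le> fst p \<and> fst p < N" "0 < s" "s < N"
  obtains W where "finite W" "satisfied W" "X \<subseteq> W" "card W \<le> card Z + card X"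
proof -
  define R where "R = snd ` X"
  obtain g where g: "mono g" "\<And>y. g y \<in> R" "\<And>y. y \<in> R \<Longrightarrow> g y = y"
    using ex_mono_retraction[of R] assms(4,5) unfolding R_def by blast
  define fL where "fL x = min (max x s) (N - 1) - s" for x
  define fR where "fR x = min (max x 0) (s - 1) + (N - s)" for x
  define W where "W = swap_halves s fL fR g (N - s) R Z"
  have mono: "mono fL" "mono fR"
    by (auto intro!: monoI simp: fL_def fR_def)
  have bounds: "fL x < N - s" "N - s \<le> fR x" for x
    using assms(7,8) by (auto simp: fL_def fR_def)
  have "X \<subseteq> W"
  proof
    fix p assume "p \<in> X"
    obtain x y where p: "p = (x, y)"
      by fastforce
    have "((x + s) mod N, y) \<in> Z" "g y = y"
      using assms(3) \<open>p \<in> X\<close> g(3) unfolding p cyc_shift_def R_def by force+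
    moreover have "0 \<le> x" "x < N"
      using assms(6) \<open>p \<in> X\<close> p by auto
    ultimately consider
        "(x + s, y) \<in> Z" "s \<le> x + s" "fL (x + s) = x"
      | "(x + s - N, y) \<in> Z" "x + s - N < s" "fR (x + s - N) = x"
      using assms(7,8) unfolding fL_def fR_def
      by (cases "x + s < N") (auto simp: mod_add_less_cases)
    then show "p \<in> W"
      unfolding W_def swap_halves_def p using \<open>g y = y\<close> by cases force+
  qed
  moreover have "card W \<le> card Z + card X"
    using card_swap_halves_le[OF assms(1)] card_image_le[OF assms(4), of snd]
    unfolding W_def R_def by (meson add_left_mono order_trans)
  moreover have "satisfied W"
    unfolding W_def by (rule satisfied_swap_halves[OF assms(1,2) mono g(1) bounds g(2)])
  moreover have "finite W"
    unfolding W_def R_def using assms(1,4) by (simp add: finite_swap_halves)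
  ultimately show ?thesis
    using that by blast
qed

lemma cyc_shift_0:
  assumes "\<forall>p\<in>X. 0 \<le> fst p \<and> fst p < N"
  shows "cyc_shift N 0 X = X"
proof -
  have "(\<lambda>p. ((fst p + 0) mod N, snd p)) ` X = id ` X"
    using assms by (intro image_cong) auto
  then show ?thesis
    unfolding cyc_shift_def by simp
qed

theorem claim4p4:
  fixes X :: "point set" and N s :: int
  assumes "finite X" and "semi_permutation X"
    and "\<forall>p\<in>X. 0 \<le> fst p \<and> fst p < N"
    and "0 \<le> s" and "s < N"
  shows "int (opt (cyc_shift N s X)) \<ge> int (opt X) - int (card X)"
proof (cases "s = 0 \<or> X = {}")
  case True
  then have "cyc_shift N s X = X"
    using cyc_shift_0[OF assms(3)] by (metis cyc_shift_def image_empty)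
  then show ?thesis
    by simp
next
  case False
  let ?Xs = "cyc_shift N s X"
  have "finite ?Xs"
    using assms(1) by (simp add: cyc_shift_def)
  then obtain Y where Y: "finite Y" "card Y = opt ?Xs" "satisfied (?Xs \<union> Y)"
    using opt_witness by blast
  then obtain W where W: "finite W" "satisfied W" "X \<subseteq> W"
      "card W \<le> card (?Xs \<union> Y) + card X"
    using satisfied_superset_unshift[of "?Xs \<union> Y" N s X] \<open>finite ?Xs\<close> False assms(1,3,4,5)
    by auto
  have "card ?Xs \<le> card X"
    unfolding cyc_shift_def using assms(1) by (rule card_image_le)
  then have "card (?Xs \<union> Y) \<le> card X + opt ?Xs"
    using card_Un_le[of ?Xs Y] Y(2) by linarith
  moreover have "opt X \<le> card W - card X"
    using W(1-3) by (rule opt_le_superset)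
  ultimately show ?thesis
    using W(4) by linarith
qed

end
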